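(* Let $\mathcal V$ be a finite vocabulary, $C\ge 2$, $\gamma\in\mathbb R$, and let $s,v:\mathcal V\to\mathbb R$ be unknown maps satisfying $\sum_{\tau\in\mathcal V}s(\tau)=\gamma$. Let $G(\mathbf t)=F^{\mathrm{SLALOM}}_{s,v}(\mathbf t)$ for all sequences $\mathbf t$ over $\mathcal V$ with $1\le|\mathbf t|\le C$, and assume $G$ is non-constant on this set of sequences. Then, given $\gamma$ and query access to $G$, the maps $s$ and $v$ can be recovered exactly using $2|\mathcal V|-1$ queries of $G$, all on sequences of length at most $2$ (the queried sequences may be chosen adaptively based on previous answers). In particular, $s$ and $v$ are uniquely determined by $G$ together with $\gamma$.
   Context: SLALOM (Softmax-Linked Additive Log Odds Model): given a token importance map $s:\mathcal V\to\mathbb R$ and a token value map $v:\mathcal V\to\mathbb R$, for a sequence $\mathbf t$ define $\alpha_i(\mathbf t)=\exp(s(t_i))/\sum_{j=1}^{|\mathbf t|}\exp(s(t_j))$ and $F^{\mathrm{SLALOM}}_{s,v}(\mathbf t)=\sum_{i=1}^{|\mathbf t|}\alpha_i(\mathbf t)\,v(t_i)$ (sums over positions, counting repeated tokens with multiplicity). The normalization constraint is $\sum_{\tau\in\mathcal V}s(\tau)=\gamma$ for a fixed user-chosen $\gamma\in\mathbb R$. *)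

theory Defs
  imports Complex_Main
begin

definition slalom_alpha :: "('a \<Rightarrow> real) \<Rightarrow> 'a list \<Rightarrow> nat \<Rightarrow> real" where
  "slalom_alpha s t i = exp (s (t ! i)) / (\<Sum>j<length t. exp (s (t ! j)))"

definition slalom :: "('a \<Rightarrow> real) \<Rightarrow> ('a \<Rightarrow> real) \<Rightarrow> 'a list \<Rightarrow> real" where
  "slalom s v t = (\<Sum>i<length t. slalom_alpha s t i * v (t ! i))"

text \<open>Adaptive query strategies: a decision tree that either outputs a result, or
  queries the oracle on a sequence and continues depending on the answer.\<close>

datatype ('a, 'b) qtree = Leaf 'b | Query "'a list" "real \<Rightarrow> ('a, 'b) qtree"

primrec run :: "('a list \<Rightarrow> real) \<Rightarrow> ('a, 'b) qtree \<Rightarrow> 'b" where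
  "run G (Leaf b) = b"
| "run G (Query t k) = run G (k (G t))"

primrec queries :: "('a list \<Rightarrow> real) \<Rightarrow> ('a, 'b) qtree \<Rightarrow> 'a list list" where
  "queries G (Leaf b) = []"
| "queries G (Query t k) = t # queries G (k (G t))"

end

theory Submission
  imports Defs
begin

text \<open>Singleton queries reveal \<open>v\<close> directly, so a non-constant output forces two tokens
  \<open>a, b\<close> with \<open>v a \<noteq> v b\<close>. For a pair with distinct values, \<open>G [x, y]\<close> is a strict convex
  combination of \<open>v x\<close> and \<open>v y\<close> with weight \<open>\<sigma>(s x - s y)\<close> on \<open>v x\<close>, so its log-odds give
  \<open>s x - s y\<close>. Every other token \<open>c\<close> differs in value from \<open>a\<close> or from \<open>b\<close>; one pair query
  then fixes \<open>s c - s a\<close>, and the normalisation \<open>\<Sum> s = \<gamma>\<close> fixes \<open>s a\<close>. This costs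
  \<open>|V|\<close> singleton queries and \<open>|V| - 1\<close> pair queries.\<close>

fun query_fun :: "'a list list \<Rightarrow> (('a list \<Rightarrow> real) \<Rightarrow> ('a, 'b) qtree) \<Rightarrow> ('a, 'b) qtree" where
  "query_fun [] k = k (\<lambda>_. 0)"
| "query_fun (t # ts) k = Query t (\<lambda>x. query_fun ts (\<lambda>g. k (g(t := x))))"

lemma run_query_fun:
  "run G (query_fun ts k) = run G (k (\<lambda>t. if t \<in> set ts then G t else 0))"
proof (induction ts arbitrary: k)
  case (Cons t ts)
  have "(\<lambda>u. if u \<in> set ts then G u else 0)(t := G t) = (\<lambda>u. if u \<in> set (t # ts) then G u else 0)"
    by auto
  then show ?case using Cons.IH by simp
qed simp

lemma queries_query_fun:
  "queries G (query_fun ts k) = ts @ queries G (k (\<lambda>t. if t \<in> set ts then G t else 0))"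
proof (induction ts arbitrary: k)
  case (Cons t ts)
  have "(\<lambda>u. if u \<in> set ts then G u else 0)(t := G t) = (\<lambda>u. if u \<in> set (t # ts) then G u else 0)"
    by auto
  then show ?case using Cons.IH by simp
qed simp

lemma slalom_singleton: "slalom s v [a] = v a"
  by (simp add: slalom_def slalom_alpha_def)

lemma slalom_pair:
  "slalom s v [x, y] = (exp (s x) * v x + exp (s y) * v y) / (exp (s x) + exp (s y))"
  by (simp add: slalom_def slalom_alpha_def lessThan_Suc numeral_2_eq_2 add_divide_distrib
      add.commute)

lemma slalom_const_value:
  assumes "t \<noteq> []"
  shows "slalom s (\<lambda>_. k) t = k"
proof -
  let ?Z = "\<Sum>j<length t. exp (s (t ! j))"
  have "?Z > 0"
    using assms by (intro sum_pos) (auto simp: lessThan_empty_iff)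
  moreover have "slalom s (\<lambda>_. k) t = k * ?Z / ?Z"
    by (simp add: slalom_def slalom_alpha_def sum_divide_distrib sum_distrib_left mult.commute)
  ultimately show ?thesis
    by simp
qed

lemma slalom_nonconstant_value:
  assumes "t1 \<noteq> []" "t2 \<noteq> []" "slalom s v t1 \<noteq> slalom s v t2"
  shows "\<exists>x y. v x \<noteq> v y"
proof (rule ccontr)
  assume "\<not> (\<exists>x y. v x \<noteq> v y)"
  then have "v = (\<lambda>_. v undefined)"
    by auto
  then show False
    using assms slalom_const_value by metis
qed

definition pair_log_odds :: "('a \<Rightarrow> real) \<Rightarrow> real \<Rightarrow> 'a \<Rightarrow> 'a \<Rightarrow> real" where
  "pair_log_odds v g x y = (let p = (g - v y) / (v x - v y) in ln (p / (1 - p)))"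

lemma pair_log_odds_slalom:
  assumes "v x \<noteq> v y"
  shows "pair_log_odds v (slalom s v [x, y]) x y = s x - s y"
proof -
  define Z where "Z = exp (s x) + exp (s y)"
  have "Z > 0"
    unfolding Z_def by (simp add: add_pos_pos)
  have weight: "(slalom s v [x, y] - v y) / (v x - v y) = exp (s x) / Z"
  proof -
    have "slalom s v [x, y] - v y = exp (s x) * (v x - v y) / Z"
      using \<open>Z > 0\<close> unfolding slalom_pair Z_def[symmetric] by (simp add: field_simps Z_def)
    then show ?thesis
      using assms by simp
  qed
  have "1 - exp (s x) / Z = exp (s y) / Z"
    using \<open>Z > 0\<close> by (simp add: field_simps Z_def)
  moreover have "exp (s x) / Z / (exp (s y) / Z) = exp (s x - s y)"
    using \<open>Z > 0\<close> by (simp add: exp_diff)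
  ultimately show ?thesis
    unfolding pair_log_odds_def Let_def weight by simp
qed

text \<open>Since \<open>v a \<noteq> v b\<close>, the partner of \<open>c\<close> has a value different from \<open>v c\<close>.\<close>

definition partner :: "('a \<Rightarrow> real) \<Rightarrow> 'a \<Rightarrow> 'a \<Rightarrow> 'a \<Rightarrow> 'a" where
  "partner v a b c = (if v c \<noteq> v a then a else b)"

definition score_offset :: "('a \<Rightarrow> real) \<Rightarrow> 'a \<Rightarrow> 'a \<Rightarrow> ('a list \<Rightarrow> real) \<Rightarrow> 'a \<Rightarrow> real" where
  "score_offset v a b g c =
    (if c = a then 0
     else if c = b then - pair_log_odds v (g [a, b]) a b
     else if v c \<noteq> v a then pair_log_odds v (g [c, a]) c a
     else pair_log_odds v (g [c, b]) c b - pair_log_odds v (g [a, b]) a b)"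

definition pair_queries :: "('a \<Rightarrow> real) \<Rightarrow> 'a \<Rightarrow> 'a \<Rightarrow> 'a list \<Rightarrow> 'a list list" where
  "pair_queries v a b cs = [a, b] # map (\<lambda>c. [c, partner v a b c]) (filter (\<lambda>c. c \<noteq> a \<and> c \<noteq> b) cs)"

lemma score_offset_eq:
  assumes "v a \<noteq> v b" "c \<in> set cs" "\<forall>t \<in> set (pair_queries v a b cs). g t = slalom s v t"
  shows "score_offset v a b g c = s c - s a"
proof -
  have "g [a, b] = slalom s v [a, b]"
    using assms(3) by (simp add: pair_queries_def)
  then have ab: "pair_log_odds v (g [a, b]) a b = s a - s b"
    using pair_log_odds_slalom[of v a b s, OF assms(1)] by simp
  consider "c = a" | "c = b" | "c \<noteq> a" "c \<noteq> b" "v c \<noteq> v a" | "c \<noteq> a" "c \<noteq> b" "v c = v a"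
    by blast
  then show ?thesis
  proof cases
    case 3
    then have "g [c, a] = slalom s v [c, a]"
      using assms(2,3) by (auto simp: pair_queries_def partner_def)
    then show ?thesis
      using 3 pair_log_odds_slalom[of v c a s] by (simp add: score_offset_def)
  next
    case 4
    then have "g [c, b] = slalom s v [c, b]"
      using assms(2,3) by (auto simp: pair_queries_def partner_def)
    then show ?thesis
      using 4 assms(1) ab pair_log_odds_slalom[of v c b s] by (simp add: score_offset_def)
  qed (use ab in \<open>auto simp: score_offset_def\<close>)
qed

definition recover_scores ::
  "real \<Rightarrow> ('a::finite \<Rightarrow> real) \<Rightarrow> 'a \<Rightarrow> 'a \<Rightarrow> ('a list \<Rightarrow> real) \<Rightarrow> 'a \<Rightarrow> real" where
  "recover_scores \<gamma> v a b g c =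
    (\<gamma> - (\<Sum>d\<in>UNIV. score_offset v a b g d)) / card (UNIV :: 'a set) + score_offset v a b g c"

lemma recover_scores_eq:
  fixes s :: "'a::finite \<Rightarrow> real"
  assumes "v a \<noteq> v b" "set cs = UNIV" "\<forall>t \<in> set (pair_queries v a b cs). g t = slalom s v t"
    and "(\<Sum>\<tau>\<in>UNIV. s \<tau>) = \<gamma>"
  shows "recover_scores \<gamma> v a b g = s"
proof
  fix c
  have offset: "score_offset v a b g d = s d - s a" for d
    using score_offset_eq[OF assms(1) _ assms(3)] assms(2) by blast
  have "(\<Sum>d\<in>UNIV. score_offset v a b g d) = \<gamma> - card (UNIV :: 'a set) * s a"
    unfolding offset using assms(4) by (simp add: sum_subtractf)
  then have "(\<gamma> - (\<Sum>d\<in>UNIV. score_offset v a b g d)) / card (UNIV :: 'a set) = s a"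
    by (simp add: finite_UNIV_card_ge_0)
  then show "recover_scores \<gamma> v a b g c = s c"
    unfolding recover_scores_def offset by simp
qed

lemma length_pair_queries:
  fixes cs :: "'a list"
  assumes "a \<noteq> b" "distinct cs" "set cs = UNIV"
  shows "length (pair_queries v a b cs) = card (UNIV :: 'a set) - 1"
proof -
  have "{c. c \<noteq> a \<and> c \<noteq> b} \<inter> set cs = UNIV - {a, b}"
    using assms(3) by auto
  then have "length (filter (\<lambda>c. c \<noteq> a \<and> c \<noteq> b) cs) = card (UNIV - {a, b})"
    by (simp only: distinct_length_filter[OF assms(2)])
  moreover have "finite (UNIV :: 'a set)"
    using finite_set[of cs] assms(3) by simp
  then have "card {a, b} \<le> card (UNIV :: 'a set)"
    by (rule card_mono) simp
  ultimately show ?thesis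
    using assms(1) by (simp add: pair_queries_def card_Diff_subset)
qed

definition univ_list :: "'a::finite list" where
  "univ_list = (SOME xs. distinct xs \<and> set xs = UNIV)"

lemma univ_list: "distinct (univ_list :: 'a::finite list)" "set (univ_list :: 'a list) = UNIV"
proof -
  have "\<exists>xs :: 'a list. distinct xs \<and> set xs = UNIV"
    using finite_distinct_list finite_UNIV by metis
  from someI_ex[OF this] show "distinct (univ_list :: 'a list)" "set (univ_list :: 'a list) = UNIV"
    unfolding univ_list_def by auto
qed

definition gap_pair :: "('a \<Rightarrow> real) \<Rightarrow> 'a \<times> 'a" where
  "gap_pair v = (SOME p. v (fst p) \<noteq> v (snd p))"

lemma gap_pair:
  assumes "v x \<noteq> v y"
  shows "v (fst (gap_pair v)) \<noteq> v (snd (gap_pair v))"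
  unfolding gap_pair_def by (rule someI[of _ "(x, y)"]) (use assms in simp)

definition recovery_tree :: "real \<Rightarrow> ('a::finite, ('a \<Rightarrow> real) \<times> ('a \<Rightarrow> real)) qtree" where
  "recovery_tree \<gamma> = query_fun (map (\<lambda>a. [a]) univ_list) (\<lambda>g.
     let v = (\<lambda>a. g [a]); (a, b) = gap_pair v in
     query_fun (pair_queries v a b univ_list) (\<lambda>h. Leaf (recover_scores \<gamma> v a b h, v)))"

lemma recovery_tree_on_slalom:
  fixes s v :: "'a::finite \<Rightarrow> real"
  defines "a \<equiv> fst (gap_pair v)" and "b \<equiv> snd (gap_pair v)"
  defines "P \<equiv> pair_queries v a b univ_list"
  shows "run (slalom s v) (recovery_tree \<gamma>)
           = (recover_scores \<gamma> v a b (\<lambda>t. if t \<in> set P then slalom s v t else 0), v)"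
    and "queries (slalom s v) (recovery_tree \<gamma>) = map (\<lambda>a. [a]) univ_list @ P"
proof -
  have "(\<lambda>c. if [c] \<in> set (map (\<lambda>a. [a]) univ_list) then slalom s v [c] else 0) = v"
    by (auto simp: univ_list slalom_singleton)
  then show "run (slalom s v) (recovery_tree \<gamma>)
           = (recover_scores \<gamma> v a b (\<lambda>t. if t \<in> set P then slalom s v t else 0), v)"
    and "queries (slalom s v) (recovery_tree \<gamma>) = map (\<lambda>a. [a]) univ_list @ P"
    by (simp_all add: recovery_tree_def run_query_fun queries_query_fun case_prod_beta
        a_def b_def P_def)
qed

theorem proposition5p2:
  fixes \<gamma> :: real and C :: nat
  assumes "C \<ge> 2"
  shows "\<exists>T :: ('a::finite, ('a \<Rightarrow> real) \<times> ('a \<Rightarrow> real)) qtree.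
    \<forall>s v :: 'a \<Rightarrow> real.
      (\<Sum>\<tau>\<in>UNIV. s \<tau>) = \<gamma> \<longrightarrow>
      (\<exists>t1 t2. 1 \<le> length t1 \<and> length t1 \<le> C \<and> 1 \<le> length t2 \<and> length t2 \<le> C
               \<and> slalom s v t1 \<noteq> slalom s v t2) \<longrightarrow>
      run (slalom s v) T = (s, v)
      \<and> length (queries (slalom s v) T) \<le> 2 * card (UNIV :: 'a set) - 1
      \<and> (\<forall>t\<in>set (queries (slalom s v) T). 1 \<le> length t \<and> length t \<le> 2)"
proof (intro exI[of _ "recovery_tree \<gamma>"] allI impI)
  fix s v :: "'a \<Rightarrow> real"
  assume sum: "(\<Sum>\<tau>\<in>UNIV. s \<tau>) = \<gamma>"
  assume "\<exists>t1 t2. 1 \<le> length t1 \<and> length t1 \<le> C \<and> 1 \<le> length t2 \<and> length t2 \<le> C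
               \<and> slalom s v t1 \<noteq> slalom s v t2"
  then obtain x y where "v x \<noteq> v y"
    using slalom_nonconstant_value by (metis list.size(3) not_one_le_zero)
  define a b where "a = fst (gap_pair v)" and "b = snd (gap_pair v)"
  define P where "P = pair_queries v a b univ_list"
  have "v a \<noteq> v b"
    unfolding a_def b_def using gap_pair[of v x y, OF \<open>v x \<noteq> v y\<close>] .
  then have "length P = card (UNIV :: 'a set) - 1"
    unfolding P_def by (intro length_pair_queries univ_list) auto
  moreover have "recover_scores \<gamma> v a b (\<lambda>t. if t \<in> set P then slalom s v t else 0) = s"
    using recover_scores_eq[OF \<open>v a \<noteq> v b\<close> univ_list(2) _ sum] by (simp add: P_def)
  moreover have "length (univ_list :: 'a list) = card (UNIV :: 'a set)"
    by (metis distinct_card univ_list)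
  moreover have "\<forall>t \<in> set P. length t = 2"
    by (auto simp: P_def pair_queries_def)
  ultimately show "run (slalom s v) (recovery_tree \<gamma>) = (s, v)
      \<and> length (queries (slalom s v) (recovery_tree \<gamma>)) \<le> 2 * card (UNIV :: 'a set) - 1
      \<and> (\<forall>t\<in>set (queries (slalom s v) (recovery_tree \<gamma>)). 1 \<le> length t \<and> length t \<le> 2)"
    unfolding recovery_tree_on_slalom a_def[symmetric] b_def[symmetric] P_def[symmetric]
    by (auto simp: univ_list finite_UNIV_card_ge_0)
qed

end
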